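(* Let $G=(V,E)$ be a $k$-colorable chordal graph and let $T$ be a clique of $G$ such that $(G,T)$ is the join of $(G_1,T)$ and $(G_2,T)$. If one of $\mathcal{C}^c_k(G_1,T)$ and $\mathcal{C}^c_k(G_2,T)$ is an $(m,k)$-color-complete graph (for some $m$), then $\mathcal{C}^c_k(G,T)$ equals (up to label-preserving isomorphism) the other one. If both $\mathcal{C}^c_k(G_1,T)$ and $\mathcal{C}^c_k(G_2,T)$ are forests satisfying the injective neighborhood property, then $\mathcal{C}^c_k(G,T)$ is a forest satisfying the injective neighborhood property.
   Context: A chordal graph has no induced cycle of length $>3$. $(G,T)$ is the join of $(G_1,T)$ and $(G_2,T)$ if $G_1,G_2$ are induced subgraphs of $G$, $V(G_1)\cap V(G_2)=T$, $V(G_1)\cup V(G_2)=V(G)$, $V(G_1)\ne T\ne V(G_2)$, and every edge of $G$ lies in $G_1$ or $G_2$. A $k$-coloring of $G$ is a map $\alpha:V(G)\to\{1,\dots,k\}$ with $\alpha(u)\ne\alpha(w)$ for all edges $uw$. $\mathcal{C}_k(G)$ has the $k$-colorings as nodes, adjacent iff they differ on exactly one vertex. For $T\subseteq V(G)$, label each coloring $\gamma$ by $\gamma|_T$. A label component is a maximal set of colorings with the same label inducing a connected subgraph of $\mathcal{C}_k(G)$. The contracted solution graph $\mathcal{C}^c_k(G,T)=(H,\ell)$ has one node $x$ per label component $S_x$, distinct $x,y$ adjacent iff some $\gamma\in S_x,\gamma'\in S_y$ are adjacent in $\mathcal{C}_k(G)$, and $\ell(x)$ the common label on $S_x$. For $1\le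 m\le k$, a labeled graph $(H,\ell)$ is $(m,k)$-color-complete if there is a set $T$ with $|T|=m$ such that every label is a $k$-coloring of the complete graph on $T$, every such $k$-coloring is the label of exactly one node, and two nodes are adjacent iff their labels differ on exactly one element of $T$. $(H,\ell)$ satisfies the injective neighborhood property if any two distinct neighbors of any node have distinct labels. *)

theory Defs
  imports Main
begin

definition graph :: "'v set \<Rightarrow> 'v set set \<Rightarrow> bool" where
  "graph V E \<longleftrightarrow> finite V \<and> (\<forall>e\<in>E. \<exists>u w. e = {u, w} \<and> u \<noteq> w \<and> u \<in> V \<and> w \<in> V)"

definition induced :: "'v set set \<Rightarrow> 'v set \<Rightarrow> 'v set set" where
  "induced E U = {e \<in> E. e \<subseteq> U}"

definition complete_edges :: "'v set \<Rightarrow> 'v set set" where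
  "complete_edges U = {{u, w} | u w. u \<in> U \<and> w \<in> U \<and> u \<noteq> w}"

definition is_clique :: "'v set \<Rightarrow> 'v set set \<Rightarrow> 'v set \<Rightarrow> bool" where
  "is_clique V E T \<longleftrightarrow> T \<subseteq> V \<and> (\<forall>u\<in>T. \<forall>w\<in>T. u \<noteq> w \<longrightarrow> {u, w} \<in> E)"

definition induced_cycle :: "'v set \<Rightarrow> 'v set set \<Rightarrow> 'v list \<Rightarrow> bool" where
  "induced_cycle V E cs \<longleftrightarrow> distinct cs \<and> set cs \<subseteq> V \<and>
     (\<forall>i < length cs. \<forall>j < length cs. i \<noteq> j \<longrightarrow>
        ({cs ! i, cs ! j} \<in> E \<longleftrightarrow> (j = Suc i mod length cs \<or> i = Suc j mod length cs)))"

definition chordal :: "'v set \<Rightarrow> 'v set set \<Rightarrow> bool" where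
  "chordal V E \<longleftrightarrow> \<not> (\<exists>cs. length cs > 3 \<and> induced_cycle V E cs)"

definition is_join :: "'v set \<Rightarrow> 'v set set \<Rightarrow> 'v set \<Rightarrow> 'v set \<Rightarrow> 'v set \<Rightarrow> bool" where
  "is_join V E T V1 V2 \<longleftrightarrow> V1 \<subseteq> V \<and> V2 \<subseteq> V \<and> V1 \<inter> V2 = T \<and> V1 \<union> V2 = V \<and>
     V1 \<noteq> T \<and> V2 \<noteq> T \<and> (\<forall>e\<in>E. e \<in> induced E V1 \<or> e \<in> induced E V2)"

text \<open>k-colorings, represented extensionally (value 0 outside V), colors 1..k.\<close>
definition coloring :: "'v set \<Rightarrow> 'v set set \<Rightarrow> nat \<Rightarrow> ('v \<Rightarrow> nat) \<Rightarrow> bool" where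
  "coloring V E k \<alpha> \<longleftrightarrow> (\<forall>v\<in>V. \<alpha> v \<in> {1..k}) \<and> (\<forall>v. v \<notin> V \<longrightarrow> \<alpha> v = 0) \<and>
     (\<forall>u w. {u, w} \<in> E \<longrightarrow> u \<noteq> w \<longrightarrow> \<alpha> u \<noteq> \<alpha> w)"

definition colorings :: "'v set \<Rightarrow> 'v set set \<Rightarrow> nat \<Rightarrow> ('v \<Rightarrow> nat) set" where
  "colorings V E k = {\<alpha>. coloring V E k \<alpha>}"

definition colorable :: "'v set \<Rightarrow> 'v set set \<Rightarrow> nat \<Rightarrow> bool" where
  "colorable V E k \<longleftrightarrow> colorings V E k \<noteq> {}"

definition col_adj :: "('v \<Rightarrow> nat) \<Rightarrow> ('v \<Rightarrow> nat) \<Rightarrow> bool" where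
  "col_adj \<alpha> \<beta> \<longleftrightarrow> card {v. \<alpha> v \<noteq> \<beta> v} = 1"

definition label :: "'v set \<Rightarrow> ('v \<Rightarrow> nat) \<Rightarrow> ('v \<Rightarrow> nat)" where
  "label T \<gamma> = (\<lambda>v. if v \<in> T then \<gamma> v else 0)"

definition induces_connected :: "('v \<Rightarrow> nat) set \<Rightarrow> bool" where
  "induces_connected S \<longleftrightarrow> (\<forall>\<alpha>\<in>S. \<forall>\<beta>\<in>S. (\<alpha>, \<beta>) \<in> ({(x, y). col_adj x y} \<inter> S \<times> S)\<^sup>*)"

definition same_label_conn :: "'v set \<Rightarrow> 'v set set \<Rightarrow> nat \<Rightarrow> 'v set \<Rightarrow> ('v \<Rightarrow> nat) set \<Rightarrow> bool" where
  "same_label_conn V E k T S \<longleftrightarrow> S \<noteq> {} \<and> S \<subseteq> colorings V E k \<and>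
     (\<forall>\<alpha>\<in>S. \<forall>\<beta>\<in>S. label T \<alpha> = label T \<beta>) \<and> induces_connected S"

definition label_component :: "'v set \<Rightarrow> 'v set set \<Rightarrow> nat \<Rightarrow> 'v set \<Rightarrow> ('v \<Rightarrow> nat) set \<Rightarrow> bool" where
  "label_component V E k T S \<longleftrightarrow> same_label_conn V E k T S \<and>
     (\<forall>S'. S \<subseteq> S' \<and> same_label_conn V E k T S' \<longrightarrow> S' = S)"

text \<open>Contracted solution graph C^c_k(G,T) = (H, l): nodes are the label components.\<close>
definition csg_nodes :: "'v set \<Rightarrow> 'v set set \<Rightarrow> nat \<Rightarrow> 'v set \<Rightarrow> ('v \<Rightarrow> nat) set set" where
  "csg_nodes V E k T = {S. label_component V E k T S}"

definition csg_edges :: "'v set \<Rightarrow> 'v set set \<Rightarrow> nat \<Rightarrow> 'v set \<Rightarrow> ('v \<Rightarrow> nat) set set set" where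
  "csg_edges V E k T = {{x, y} | x y. x \<in> csg_nodes V E k T \<and> y \<in> csg_nodes V E k T \<and> x \<noteq> y \<and>
      (\<exists>\<gamma>\<in>x. \<exists>\<gamma>'\<in>y. col_adj \<gamma> \<gamma>')}"

definition csg_label :: "'v set \<Rightarrow> ('v \<Rightarrow> nat) set \<Rightarrow> ('v \<Rightarrow> nat)" where
  "csg_label T x = label T (SOME \<gamma>. \<gamma> \<in> x)"

definition color_complete ::
  "nat \<Rightarrow> nat \<Rightarrow> 'n set \<Rightarrow> 'n set set \<Rightarrow> ('n \<Rightarrow> ('a \<Rightarrow> nat)) \<Rightarrow> bool" where
  "color_complete m k N A l \<longleftrightarrow> 1 \<le> m \<and> m \<le> k \<and>
     (\<exists>T'. finite T' \<and> card T' = m \<and>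
        (\<forall>x\<in>N. coloring T' (complete_edges T') k (l x)) \<and>
        (\<forall>c. coloring T' (complete_edges T') k c \<longrightarrow> (\<exists>!x. x \<in> N \<and> l x = c)) \<and>
        (\<forall>x\<in>N. \<forall>y\<in>N. {x, y} \<in> A \<longleftrightarrow> card {v \<in> T'. l x v \<noteq> l y v} = 1))"

definition injective_nbh :: "'n set \<Rightarrow> 'n set set \<Rightarrow> ('n \<Rightarrow> 'l) \<Rightarrow> bool" where
  "injective_nbh N A l \<longleftrightarrow> (\<forall>x\<in>N. \<forall>y\<in>N. \<forall>z\<in>N.
     {x, y} \<in> A \<and> {x, z} \<in> A \<and> y \<noteq> x \<and> z \<noteq> x \<and> y \<noteq> z \<longrightarrow> l y \<noteq> l z)"

definition has_cycle :: "'n set \<Rightarrow> 'n set set \<Rightarrow> bool" where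
  "has_cycle N A \<longleftrightarrow> (\<exists>cs. length cs \<ge> 3 \<and> distinct cs \<and> set cs \<subseteq> N \<and>
     (\<forall>i < length cs. {cs ! i, cs ! (Suc i mod length cs)} \<in> A))"

definition forest :: "'n set \<Rightarrow> 'n set set \<Rightarrow> bool" where
  "forest N A \<longleftrightarrow> \<not> has_cycle N A"

definition labeled_iso ::
  "'n set \<Rightarrow> 'n set set \<Rightarrow> ('n \<Rightarrow> 'l) \<Rightarrow> 'm set \<Rightarrow> 'm set set \<Rightarrow> ('m \<Rightarrow> 'l) \<Rightarrow> bool" where
  "labeled_iso N1 A1 l1 N2 A2 l2 \<longleftrightarrow> (\<exists>f. bij_betw f N1 N2 \<and>
     (\<forall>x\<in>N1. \<forall>y\<in>N1. {x, y} \<in> A1 \<longleftrightarrow> {f x, f y} \<in> A2) \<and>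
     (\<forall>x\<in>N1. l2 (f x) = l1 x))"

end

theory Submission
  imports Defs
begin

text \<open>Write \<open>C(H)\<close> for the contracted solution graph of \<open>(H, T)\<close>. Colorings of \<open>G1\<close> and \<open>G2\<close>
  that agree on the separator \<open>T\<close> glue to a coloring of \<open>G\<close>, since no edge joins \<open>V1 - T\<close> to
  \<open>V2 - T\<close>, and every coloring of \<open>G\<close> arises this way. A recoloring that keeps the label on \<open>T\<close>
  changes a vertex outside \<open>T\<close>, so it acts on one side only; hence two colorings of \<open>G\<close> lie in the
  same label component iff their restrictions do on both sides. Consequently projection maps
  \<open>C(G)\<close> to \<open>C(G1)\<close> and to \<open>C(G2)\<close> preserving labels and edges, and a node of \<open>C(G)\<close> is
  determined by its two projections.

  With the injective neighbourhood property on both sides, two neighbours in \<open>C(G)\<close> with equal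
  labels have equal projections, hence coincide; a cycle of \<open>C(G)\<close> then projects to a closed
  walk without backtracking in \<open>C(G1)\<close>, which contains a cycle. If \<open>C(G1)\<close> is color-complete,
  its nodes correspond to the colorings of the clique \<open>T\<close>, and projection \<open>C(G) \<rightarrow> C(G2)\<close> is a
  label-preserving isomorphism.\<close>

lemma col_adj_commute: "col_adj \<alpha> \<beta> = col_adj \<beta> \<alpha>"
  unfolding col_adj_def by (simp add: eq_commute)

lemma col_adj_iff: "col_adj \<alpha> \<beta> \<longleftrightarrow> (\<exists>v. {w. \<alpha> w \<noteq> \<beta> w} = {v})"
  unfolding col_adj_def by (simp add: card_1_singleton_iff)

lemma coloring_support: "coloring V E k c \<Longrightarrow> V = {v. c v \<noteq> 0}"
  unfolding coloring_def by fastforce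

lemma colorings_outside: "\<alpha> \<in> colorings V E k \<Longrightarrow> v \<notin> V \<Longrightarrow> \<alpha> v = 0"
  unfolding colorings_def coloring_def by auto

lemma label_eqD: "label T \<alpha> = label T \<beta> \<Longrightarrow> v \<in> T \<Longrightarrow> \<alpha> v = \<beta> v"
  unfolding label_def by meson

text \<open>\<open>label U \<alpha>\<close> is the restriction of \<open>\<alpha>\<close> to \<open>U\<close>, extended by \<open>0\<close>; it also serves as the
  restriction of colorings of \<open>G\<close> to \<open>V1\<close> and \<open>V2\<close>.\<close>
lemma label_diff: "{w. label U \<alpha> w \<noteq> label U \<beta> w} = {w. \<alpha> w \<noteq> \<beta> w} \<inter> U"
  unfolding label_def by auto

lemma label_label: "T \<subseteq> U \<Longrightarrow> label T (label U \<alpha>) = label T \<alpha>"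
  unfolding label_def by (auto simp: fun_eq_iff)

lemma label_colorings: "U \<subseteq> V \<Longrightarrow> \<alpha> \<in> colorings V E k \<Longrightarrow> label U \<alpha> \<in> colorings U (induced E U) k"
  unfolding colorings_def coloring_def label_def induced_def by auto

lemma label_coloring_clique:
  assumes \<alpha>: "\<alpha> \<in> colorings U (induced E U) k" and "T \<subseteq> U" and "is_clique V E T"
  shows "coloring T (complete_edges T) k (label T \<alpha>)"
  unfolding coloring_def
proof (intro conjI allI impI ballI)
  fix u w assume "{u, w} \<in> complete_edges T" and "u \<noteq> w"
  then have "u \<in> T" "w \<in> T"
    unfolding complete_edges_def by (auto simp: doubleton_eq_iff)
  with assms \<open>u \<noteq> w\<close> have "{u, w} \<in> induced E U"
    unfolding is_clique_def induced_def by auto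
  with \<alpha> \<open>u \<noteq> w\<close> \<open>u \<in> T\<close> \<open>w \<in> T\<close> show "label T \<alpha> u \<noteq> label T \<alpha> w"
    unfolding colorings_def coloring_def label_def by auto
qed (use assms in \<open>auto simp: label_def colorings_def coloring_def\<close>)

text \<open>The set \<open>T'\<close> in the definition of color-completeness is the common support of the labels,
  so it is determined by any node whose label is known to color \<open>T\<close>.\<close>
lemma color_complete_on:
  assumes "color_complete m k N A l" and "x \<in> N" and "coloring T (complete_edges T) k (l x)"
  shows "\<forall>c. coloring T (complete_edges T) k c \<longrightarrow> (\<exists>!x. x \<in> N \<and> l x = c)"
    and "\<forall>x\<in>N. \<forall>y\<in>N. {x, y} \<in> A \<longleftrightarrow> card {v \<in> T. l x v \<noteq> l y v} = 1"
proof -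
  obtain T' where "coloring T' (complete_edges T') k (l x)"
    and "\<forall>c. coloring T' (complete_edges T') k c \<longrightarrow> (\<exists>!x. x \<in> N \<and> l x = c)"
    and "\<forall>x\<in>N. \<forall>y\<in>N. {x, y} \<in> A \<longleftrightarrow> card {v \<in> T'. l x v \<noteq> l y v} = 1"
    using assms(1,2) unfolding color_complete_def by blast
  moreover from calculation(1) have "T' = T"
    using coloring_support assms(3) by blast
  ultimately show "\<forall>c. coloring T (complete_edges T) k c \<longrightarrow> (\<exists>!x. x \<in> N \<and> l x = c)"
    and "\<forall>x\<in>N. \<forall>y\<in>N. {x, y} \<in> A \<longleftrightarrow> card {v \<in> T. l x v \<noteq> l y v} = 1"
    by simp_all
qed

lemma Suc_mod_neq: "i < n \<Longrightarrow> 2 \<le> n \<Longrightarrow> Suc i mod n \<noteq> (i::nat)"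
  by (cases "Suc i = n") auto

lemma Suc_Suc_mod_neq: "i < n \<Longrightarrow> 3 \<le> n \<Longrightarrow> Suc (Suc i) mod n \<noteq> (i::nat)"
  by (cases "Suc i = n"; cases "Suc (Suc i) = n") (auto simp: mod_Suc)

lemma shortest_repetition:
  assumes "\<not> distinct w"
  obtains i d where "0 < d" and "i + d < length w" and "w ! i = w ! (i + d)"
    and "distinct (map (\<lambda>a. w ! (i + a)) [0..<d])"
proof -
  define repeat where
    "repeat d \<longleftrightarrow> (\<exists>i. i + d < length w \<and> 0 < d \<and> w ! i = w ! (i + d))" for d
  from assms obtain a b where "a < b" "b < length w" "w ! a = w ! b"
    unfolding distinct_conv_nth by (metis linorder_neqE_nat)
  then have "repeat (b - a)"
    unfolding repeat_def by (auto intro!: exI[of _ a])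
  define d where "d = (LEAST d. repeat d)"
  have "repeat d"
    unfolding d_def using \<open>repeat (b - a)\<close> by (rule LeastI)
  then obtain i where i: "0 < d" "i + d < length w" "w ! i = w ! (i + d)"
    unfolding repeat_def by blast
  have no_repeat: "w ! (i + a) \<noteq> w ! (i + b)" if "a < b" "b < d" for a b
  proof
    assume "w ! (i + a) = w ! (i + b)"
    then have "repeat (b - a)"
      unfolding repeat_def using that i(2) by (intro exI[of _ "i + a"]) auto
    moreover have "b - a < d"
      using that by (simp add: less_imp_diff_less)
    ultimately show False
      using not_less_Least unfolding d_def by blast
  qed
  have "distinct (map (\<lambda>a. w ! (i + a)) [0..<d])"
    unfolding distinct_conv_nth
  proof (intro allI impI)
    fix a b assume "a < length (map (\<lambda>a. w ! (i + a)) [0..<d])"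
      and "b < length (map (\<lambda>a. w ! (i + a)) [0..<d])" and "a \<noteq> b"
    then show "map (\<lambda>a. w ! (i + a)) [0..<d] ! a \<noteq> map (\<lambda>a. w ! (i + a)) [0..<d] ! b"
      using no_repeat[of a b] no_repeat[of b a] by (cases "a < b") auto
  qed
  with i that show thesis by blast
qed

lemma has_cycle_closed_walk:
  assumes len: "3 \<le> length w" and set: "set w \<subseteq> N"
    and edge: "\<And>i. i < length w \<Longrightarrow> {w ! i, w ! (Suc i mod length w)} \<in> A"
    and step: "\<And>i. i < length w \<Longrightarrow> w ! i \<noteq> w ! (Suc i mod length w)"
    and no_backtrack: "\<And>i. i < length w \<Longrightarrow> w ! i \<noteq> w ! (Suc (Suc i) mod length w)"
  shows "has_cycle N A"
proof (cases "distinct w")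
  case True
  with assms show ?thesis
    unfolding has_cycle_def by blast
next
  case False
  then obtain i d where i: "0 < d" "i + d < length w" "w ! i = w ! (i + d)"
    and "distinct (map (\<lambda>a. w ! (i + a)) [0..<d])"
    by (rule shortest_repetition)
  define cs where "cs = map (\<lambda>a. w ! (i + a)) [0..<d]"
  have cs_nth: "cs ! a = w ! (i + a)" if "a < d" for a
    using that by (simp add: cs_def)
  have "d \<noteq> 1"
    using step[of i] i by auto
  moreover have "d \<noteq> 2"
    using no_backtrack[of i] i by auto
  ultimately have "3 \<le> d"
    using i(1) by linarith
  have "set cs \<subseteq> N"
    using set i(2) by (auto simp: cs_def)
  moreover have "{cs ! a, cs ! (Suc a mod length cs)} \<in> A" if "a < length cs" for a
  proof (cases "Suc a < d")
    case True
    then show ?thesis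
      using edge[of "i + a"] i(2) cs_nth[of a] cs_nth[of "Suc a"] by (simp add: cs_def)
  next
    case False
    with that have "Suc a = d" by (simp add: cs_def)
    then have wrap: "i + a < length w" "Suc (i + a) mod length w = i + d"
      using i(2) by auto
    have "cs ! (Suc a mod length cs) = w ! (i + d)"
      using \<open>Suc a = d\<close> i cs_nth[of 0] by (simp add: cs_def)
    then show ?thesis
      using edge[OF wrap(1), unfolded wrap(2)] cs_nth[of a] \<open>Suc a = d\<close> by simp
  qed
  ultimately show ?thesis
    using \<open>3 \<le> d\<close> \<open>distinct (map (\<lambda>a. w ! (i + a)) [0..<d])\<close>
    unfolding has_cycle_def by (auto simp: cs_def intro!: exI[of _ cs])
qed

lemma has_cycle_image:
  assumes "has_cycle N A"
    and node: "\<And>x. x \<in> N \<Longrightarrow> f x \<in> N'"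
    and edge: "\<And>x y. x \<in> N \<Longrightarrow> y \<in> N \<Longrightarrow> x \<noteq> y \<Longrightarrow> {x, y} \<in> A \<Longrightarrow> {f x, f y} \<in> A'"
    and edge_neq: "\<And>x y. x \<in> N \<Longrightarrow> y \<in> N \<Longrightarrow> x \<noteq> y \<Longrightarrow> {x, y} \<in> A \<Longrightarrow> f x \<noteq> f y"
    and locally_inj: "\<And>x y z. x \<in> N \<Longrightarrow> y \<in> N \<Longrightarrow> z \<in> N \<Longrightarrow> {y, x} \<in> A \<Longrightarrow> {y, z} \<in> A \<Longrightarrow>
      x \<noteq> y \<Longrightarrow> z \<noteq> y \<Longrightarrow> x \<noteq> z \<Longrightarrow> f x \<noteq> f z"
  shows "has_cycle N' A'"
proof -
  obtain cs where len: "3 \<le> length cs" and "distinct cs" and set: "set cs \<subseteq> N"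
    and cycle_edge: "\<forall>i < length cs. {cs ! i, cs ! (Suc i mod length cs)} \<in> A"
    using assms(1) unfolding has_cycle_def by blast
  define n where "n = length cs"
  have "3 \<le> n"
    using len by (simp add: n_def)
  have edge_i: "{cs ! i, cs ! (Suc i mod n)} \<in> A" if "i < n" for i
    using cycle_edge that unfolding n_def by blast
  have node_i: "cs ! i \<in> N" if "i < n" for i
    using set that unfolding n_def by (meson nth_mem subsetD)
  have neq: "cs ! i \<noteq> cs ! j" if "i < n" "j < n" "i \<noteq> j" for i j
    using \<open>distinct cs\<close> that unfolding n_def by (simp add: nth_eq_iff_index_eq)
  show ?thesis
  proof (rule has_cycle_closed_walk[of "map f cs"])
    show "3 \<le> length (map f cs)" and "set (map f cs) \<subseteq> N'"
      using len set node by auto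
  next
    fix i assume "i < length (map f cs)"
    then have i: "i < n"
      by (simp add: n_def)
    then have "Suc i mod n < n" and "Suc i mod n \<noteq> i"
      using Suc_mod_neq[OF i] \<open>3 \<le> n\<close> by simp_all
    then show "{map f cs ! i, map f cs ! (Suc i mod length (map f cs))} \<in> A'"
      and "map f cs ! i \<noteq> map f cs ! (Suc i mod length (map f cs))"
      using edge edge_neq node_i edge_i neq i by (simp_all add: n_def)
  next
    fix i assume "i < length (map f cs)"
    then have i: "i < n" by (simp add: n_def)
    define j where "j = Suc i mod n"
    define l where "l = Suc j mod n"
    have "j < n" "l < n"
      using \<open>3 \<le> n\<close> by (simp_all add: j_def l_def)
    moreover have "j \<noteq> i" "l \<noteq> j" "l \<noteq> i"
      using Suc_mod_neq[OF i] Suc_mod_neq[OF \<open>j < n\<close>] Suc_Suc_mod_neq[OF i] \<open>3 \<le> n\<close>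
      by (simp_all add: j_def l_def mod_Suc_eq)
    moreover have "{cs ! j, cs ! i} \<in> A" and "{cs ! j, cs ! l} \<in> A"
      using edge_i[OF i] edge_i[OF \<open>j < n\<close>] unfolding j_def l_def by (simp_all add: insert_commute)
    ultimately have "f (cs ! i) \<noteq> f (cs ! l)"
      using locally_inj node_i neq i by metis
    then show "map f cs ! i \<noteq> map f cs ! (Suc (Suc i) mod length (map f cs))"
      using i \<open>l < n\<close> by (simp add: l_def j_def n_def mod_Suc_eq)
  qed
qed

definition recolor :: "'v set \<Rightarrow> 'v set set \<Rightarrow> nat \<Rightarrow> 'v set \<Rightarrow> (('v \<Rightarrow> nat) \<times> ('v \<Rightarrow> nat)) set" where
  "recolor V E k T = {(\<alpha>, \<beta>). \<alpha> \<in> colorings V E k \<and> \<beta> \<in> colorings V E k \<and> col_adj \<alpha> \<beta> \<and> label T \<alpha> = label T \<beta>}"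

definition label_class :: "'v set \<Rightarrow> 'v set set \<Rightarrow> nat \<Rightarrow> 'v set \<Rightarrow> ('v \<Rightarrow> nat) \<Rightarrow> ('v \<Rightarrow> nat) set" where
  "label_class V E k T \<alpha> = (recolor V E k T)\<^sup>* `` {\<alpha>}"

lemma sym_recolor: "sym (recolor V E k T)"
  unfolding recolor_def sym_def using col_adj_commute by auto

lemma recolor_rtrancl_sym: "(\<alpha>, \<beta>) \<in> (recolor V E k T)\<^sup>* \<Longrightarrow> (\<beta>, \<alpha>) \<in> (recolor V E k T)\<^sup>*"
  by (metis sym_recolor sym_rtrancl symD)

lemma recolor_rtrancl_label: "(\<alpha>, \<beta>) \<in> (recolor V E k T)\<^sup>* \<Longrightarrow> label T \<alpha> = label T \<beta>"
  by (induction rule: rtrancl_induct) (auto simp: recolor_def)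

lemma recolor_rtrancl_colorings:
  "(\<alpha>, \<beta>) \<in> (recolor V E k T)\<^sup>* \<Longrightarrow> \<alpha> \<in> colorings V E k \<Longrightarrow> \<beta> \<in> colorings V E k"
  by (induction rule: rtrancl_induct) (auto simp: recolor_def)

lemma label_class_self: "\<alpha> \<in> label_class V E k T \<alpha>"
  by (simp add: label_class_def)

lemma mem_label_class: "\<beta> \<in> label_class V E k T \<alpha> \<longleftrightarrow> (\<alpha>, \<beta>) \<in> (recolor V E k T)\<^sup>*"
  by (simp add: label_class_def)

lemma label_class_eq: "(\<alpha>, \<beta>) \<in> (recolor V E k T)\<^sup>* \<Longrightarrow> label_class V E k T \<alpha> = label_class V E k T \<beta>"
  unfolding label_class_def by (meson recolor_rtrancl_sym rtrancl_trans Image_singleton_iff set_eqI)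

lemma same_label_conn_recolor_rtrancl:
  assumes "same_label_conn V E k T S" and "\<alpha> \<in> S" and "\<beta> \<in> S"
  shows "(\<alpha>, \<beta>) \<in> (recolor V E k T)\<^sup>*"
proof -
  have "({(x, y). col_adj x y} \<inter> S \<times> S) \<subseteq> recolor V E k T"
    using assms(1) unfolding same_label_conn_def recolor_def by auto
  moreover have "(\<alpha>, \<beta>) \<in> ({(x, y). col_adj x y} \<inter> S \<times> S)\<^sup>*"
    using assms unfolding same_label_conn_def induces_connected_def by blast
  ultimately show ?thesis
    using rtrancl_mono by blast
qed

lemma same_label_conn_label_class:
  assumes \<alpha>: "\<alpha> \<in> colorings V E k"
  shows "same_label_conn V E k T (label_class V E k T \<alpha>)"
proof -
  let ?S = "label_class V E k T \<alpha>"
  let ?Q = "{(x, y). col_adj x y} \<inter> ?S \<times> ?S"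
  have path: "(\<alpha>, \<beta>) \<in> ?Q\<^sup>*" if "(\<alpha>, \<beta>) \<in> (recolor V E k T)\<^sup>*" for \<beta>
    using that
  proof (induction rule: rtrancl_induct)
    case (step \<beta> \<gamma>)
    then have "(\<beta>, \<gamma>) \<in> ?Q"
      by (auto simp: mem_label_class recolor_def intro: rtrancl_into_rtrancl)
    with step.IH show ?case by (rule rtrancl_into_rtrancl)
  qed simp
  have "sym ?Q"
    by (auto simp: sym_def col_adj_commute)
  have "induces_connected ?S"
    unfolding induces_connected_def
  proof (intro ballI)
    fix \<beta> \<gamma> assume "\<beta> \<in> ?S" and "\<gamma> \<in> ?S"
    then have "(\<alpha>, \<beta>) \<in> ?Q\<^sup>*" and "(\<alpha>, \<gamma>) \<in> ?Q\<^sup>*"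
      using path by (simp_all add: mem_label_class)
    then have "(\<beta>, \<alpha>) \<in> ?Q\<^sup>*" and "(\<alpha>, \<gamma>) \<in> ?Q\<^sup>*"
      using symD[OF sym_rtrancl[OF \<open>sym ?Q\<close>]] by blast+
    then show "(\<beta>, \<gamma>) \<in> ?Q\<^sup>*" by (rule rtrancl_trans)
  qed
  moreover have "?S \<subseteq> colorings V E k"
    using \<alpha> recolor_rtrancl_colorings by (auto simp: mem_label_class)
  moreover have "label T \<beta> = label T \<alpha>" if "\<beta> \<in> ?S" for \<beta>
    using that recolor_rtrancl_label by (metis mem_label_class)
  ultimately show ?thesis
    unfolding same_label_conn_def using label_class_self by (metis empty_iff)
qed

lemma label_component_iff:
  "label_component V E k T S \<longleftrightarrow> (\<exists>\<alpha>\<in>colorings V E k. S = label_class V E k T \<alpha>)"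
proof
  assume S: "label_component V E k T S"
  then have conn: "same_label_conn V E k T S"
    and max: "\<And>S'. S \<subseteq> S' \<Longrightarrow> same_label_conn V E k T S' \<Longrightarrow> S' = S"
    unfolding label_component_def by blast+
  then obtain \<alpha> where "\<alpha> \<in> S" and \<alpha>: "\<alpha> \<in> colorings V E k"
    unfolding same_label_conn_def by blast
  have "S \<subseteq> label_class V E k T \<alpha>"
    using same_label_conn_recolor_rtrancl[OF conn \<open>\<alpha> \<in> S\<close>] by (auto simp: mem_label_class)
  then have "label_class V E k T \<alpha> = S"
    by (rule max[OF _ same_label_conn_label_class[OF \<alpha>]])
  with \<alpha> show "\<exists>\<alpha>\<in>colorings V E k. S = label_class V E k T \<alpha>" by blast
next
  assume "\<exists>\<alpha>\<in>colorings V E k. S = label_class V E k T \<alpha>"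
  then obtain \<alpha> where \<alpha>: "\<alpha> \<in> colorings V E k" and S: "S = label_class V E k T \<alpha>" by blast
  have "S' = S" if "S \<subseteq> S'" and conn: "same_label_conn V E k T S'" for S'
  proof
    have "\<alpha> \<in> S'"
      using that(1) label_class_self unfolding S by blast
    then show "S' \<subseteq> S"
      using same_label_conn_recolor_rtrancl[OF conn] by (auto simp: S mem_label_class)
  qed (fact that(1))
  then show "label_component V E k T S"
    using same_label_conn_label_class[OF \<alpha>] unfolding label_component_def S by blast
qed

lemma csg_nodes_eq: "csg_nodes V E k T = label_class V E k T ` colorings V E k"
  unfolding csg_nodes_def by (auto simp: label_component_iff)

lemma csg_nodeD:
  assumes "X \<in> csg_nodes V E k T" and "\<alpha> \<in> X"
  shows "X = label_class V E k T \<alpha>" and "\<alpha> \<in> colorings V E k"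
proof -
  obtain \<beta> where \<beta>: "\<beta> \<in> colorings V E k" "X = label_class V E k T \<beta>"
    using assms(1) unfolding csg_nodes_eq by blast
  with assms(2) have "(\<beta>, \<alpha>) \<in> (recolor V E k T)\<^sup>*"
    by (simp add: mem_label_class)
  with \<beta> show "X = label_class V E k T \<alpha>" and "\<alpha> \<in> colorings V E k"
    using label_class_eq recolor_rtrancl_colorings by metis+
qed

lemma csg_label_label_class: "csg_label T (label_class V E k T \<alpha>) = label T \<alpha>"
  unfolding csg_label_def
  by (metis label_class_self mem_label_class recolor_rtrancl_label someI)

lemma csg_label_eq: "X \<in> csg_nodes V E k T \<Longrightarrow> \<alpha> \<in> X \<Longrightarrow> csg_label T X = label T \<alpha>"
  by (metis csg_nodeD(1) csg_label_label_class)

lemma csg_edges_iff: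
  assumes "X \<in> csg_nodes V E k T" and "Y \<in> csg_nodes V E k T"
  shows "{X, Y} \<in> csg_edges V E k T \<longleftrightarrow> X \<noteq> Y \<and> (\<exists>\<alpha>\<in>X. \<exists>\<beta>\<in>Y. col_adj \<alpha> \<beta>)"
  using assms unfolding csg_edges_def
  by (auto simp: doubleton_eq_iff) (metis col_adj_commute)+

lemma csg_nodes_eqI:
  assumes "X \<in> csg_nodes V E k T" and "Y \<in> csg_nodes V E k T" and "\<alpha> \<in> X" and "\<beta> \<in> Y"
    and "col_adj \<alpha> \<beta>" and "label T \<alpha> = label T \<beta>"
  shows "X = Y"
proof -
  have "(\<alpha>, \<beta>) \<in> recolor V E k T"
    using assms csg_nodeD(2) unfolding recolor_def by blast
  then show ?thesis
    using assms csg_nodeD(1) label_class_eq by (metis r_into_rtrancl)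
qed

lemma csg_edgeE:
  assumes "{X, Y} \<in> csg_edges V E k T" and "X \<in> csg_nodes V E k T" and "Y \<in> csg_nodes V E k T"
  obtains \<alpha> \<beta> v where "\<alpha> \<in> X" "\<beta> \<in> Y" "{w. \<alpha> w \<noteq> \<beta> w} = {v}" "v \<in> T"
proof -
  have "X \<noteq> Y" and "\<exists>\<alpha>\<in>X. \<exists>\<beta>\<in>Y. col_adj \<alpha> \<beta>"
    using assms csg_edges_iff[OF assms(2,3)] by blast+
  then obtain \<alpha> \<beta> v where \<alpha>\<beta>: "\<alpha> \<in> X" "\<beta> \<in> Y" "{w. \<alpha> w \<noteq> \<beta> w} = {v}"
    unfolding col_adj_iff by blast
  have "v \<in> T"
  proof (rule ccontr)
    assume "v \<notin> T"
    with \<alpha>\<beta>(3) have "label T \<alpha> = label T \<beta>"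
      unfolding label_def by (auto simp: fun_eq_iff)
    moreover have "col_adj \<alpha> \<beta>"
      using \<alpha>\<beta>(3) col_adj_iff by blast
    ultimately show False
      using csg_nodes_eqI[OF assms(2,3) \<alpha>\<beta>(1,2)] \<open>X \<noteq> Y\<close> by blast
  qed
  with \<alpha>\<beta> that show ?thesis by blast
qed

lemma csg_edge_label_diff:
  assumes "{X, Y} \<in> csg_edges V E k T" and "X \<in> csg_nodes V E k T" and "Y \<in> csg_nodes V E k T"
  shows "\<exists>v\<in>T. {w. csg_label T X w \<noteq> csg_label T Y w} = {v}"
proof -
  obtain \<alpha> \<beta> v where "\<alpha> \<in> X" "\<beta> \<in> Y" "{w. \<alpha> w \<noteq> \<beta> w} = {v}" "v \<in> T"
    using csg_edgeE[OF assms] .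
  then show ?thesis
    using assms(2,3) label_diff[of T \<alpha> \<beta>] by (auto simp: csg_label_eq)
qed

lemma csg_edge_label_neq:
  assumes "{X, Y} \<in> csg_edges V E k T" and "X \<in> csg_nodes V E k T" and "Y \<in> csg_nodes V E k T"
  shows "csg_label T X \<noteq> csg_label T Y"
  using csg_edge_label_diff[OF assms] by auto

lemma recolor_restrict:
  assumes "U \<subseteq> V" and "T \<subseteq> U" and "(\<alpha>, \<beta>) \<in> recolor V E k T"
  shows "(label U \<alpha>, label U \<beta>) \<in> (recolor U (induced E U) k T)\<^sup>*"
proof -
  from assms(3) have \<alpha>\<beta>: "\<alpha> \<in> colorings V E k" "\<beta> \<in> colorings V E k" "label T \<alpha> = label T \<beta>"
    and "col_adj \<alpha> \<beta>"
    unfolding recolor_def by auto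
  then obtain v where v: "{w. \<alpha> w \<noteq> \<beta> w} = {v}"
    unfolding col_adj_iff by blast
  show ?thesis
  proof (cases "v \<in> U")
    case True
    with v have "col_adj (label U \<alpha>) (label U \<beta>)"
      unfolding col_adj_iff label_diff by auto
    then have "(label U \<alpha>, label U \<beta>) \<in> recolor U (induced E U) k T"
      using \<alpha>\<beta> assms(1,2) label_colorings label_label unfolding recolor_def by fastforce
    then show ?thesis by blast
  next
    case False
    with v have "label U \<alpha> = label U \<beta>"
      unfolding label_def by (auto simp: fun_eq_iff)
    then show ?thesis by simp
  qed
qed

lemma recolor_rtrancl_restrict:
  assumes "U \<subseteq> V" and "T \<subseteq> U" and "(\<alpha>, \<beta>) \<in> (recolor V E k T)\<^sup>*"
  shows "(label U \<alpha>, label U \<beta>) \<in> (recolor U (induced E U) k T)\<^sup>*"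
  using assms(3)
  by (induction rule: rtrancl_induct) (auto intro: rtrancl_trans recolor_restrict[OF assms(1,2)])

locale coloring_join =
  fixes V :: "'v set" and E :: "'v set set" and T V1 V2 :: "'v set" and k :: nat
  assumes union: "V1 \<union> V2 = V" and inter: "V1 \<inter> V2 = T"
    and edges_split: "\<forall>e\<in>E. e \<subseteq> V1 \<or> e \<subseteq> V2"
begin

abbreviation "C \<equiv> colorings V E k"
abbreviation "C1 \<equiv> colorings V1 (induced E V1) k"
abbreviation "C2 \<equiv> colorings V2 (induced E V2) k"
abbreviation "R \<equiv> recolor V E k T"
abbreviation "R1 \<equiv> recolor V1 (induced E V1) k T"
abbreviation "R2 \<equiv> recolor V2 (induced E V2) k T"

abbreviation "N \<equiv> csg_nodes V E k T"
abbreviation "N1 \<equiv> csg_nodes V1 (induced E V1) k T"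
abbreviation "N2 \<equiv> csg_nodes V2 (induced E V2) k T"
abbreviation "A \<equiv> csg_edges V E k T"
abbreviation "A1 \<equiv> csg_edges V1 (induced E V1) k T"
abbreviation "A2 \<equiv> csg_edges V2 (induced E V2) k T"

definition glue :: "('v \<Rightarrow> nat) \<Rightarrow> ('v \<Rightarrow> nat) \<Rightarrow> 'v \<Rightarrow> nat" where
  "glue \<alpha> \<beta> = (\<lambda>v. if v \<in> V1 then \<alpha> v else \<beta> v)"

lemma subset_V1: "V1 \<subseteq> V" and subset_V2: "V2 \<subseteq> V" and T_subset_V1: "T \<subseteq> V1"
  and T_subset_V2: "T \<subseteq> V2"
  using union inter by auto

lemma glue_colorings:
  assumes \<alpha>: "\<alpha> \<in> C1" and \<beta>: "\<beta> \<in> C2" and eq: "label T \<alpha> = label T \<beta>"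
  shows "glue \<alpha> \<beta> \<in> C"
  unfolding colorings_def coloring_def mem_Collect_eq
proof (intro conjI allI impI ballI)
  have on_V2: "glue \<alpha> \<beta> v = \<beta> v" if "v \<in> V2" for v
    using that inter label_eqD[OF eq] by (auto simp: glue_def)
  fix u w assume "{u, w} \<in> E" and "u \<noteq> w"
  then consider "{u, w} \<in> induced E V1" | "{u, w} \<in> induced E V2" "{u, w} \<subseteq> V2"
    using edges_split unfolding induced_def by blast
  then show "glue \<alpha> \<beta> u \<noteq> glue \<alpha> \<beta> w"
  proof cases
    case 1
    then show ?thesis
      using \<alpha> \<open>u \<noteq> w\<close> by (auto simp: glue_def induced_def colorings_def coloring_def)
  next
    case 2
    then show ?thesis
      using \<beta> \<open>u \<noteq> w\<close> on_V2 by (auto simp: colorings_def coloring_def)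
  qed
qed (use \<alpha> \<beta> union in \<open>auto simp: glue_def colorings_def coloring_def\<close>)

lemma label_V1_glue: "\<alpha> \<in> C1 \<Longrightarrow> label V1 (glue \<alpha> \<beta>) = \<alpha>"
  by (auto simp: fun_eq_iff label_def glue_def colorings_outside)

lemma label_V2_glue:
  assumes "\<beta> \<in> C2" and "label T \<alpha> = label T \<beta>"
  shows "label V2 (glue \<alpha> \<beta>) = \<beta>"
proof
  fix v
  show "label V2 (glue \<alpha> \<beta>) v = \<beta> v"
    using label_eqD[OF assms(2), of v] colorings_outside[OF assms(1), of v] inter
    by (auto simp: label_def glue_def)
qed

lemma glue_label: "\<gamma> \<in> C \<Longrightarrow> glue (label V1 \<gamma>) (label V2 \<gamma>) = \<gamma>"
  using union by (auto simp: fun_eq_iff label_def glue_def colorings_outside)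

lemma label_glue: "label T (glue \<alpha> \<beta>) = label T \<alpha>"
  using T_subset_V1 by (auto simp: fun_eq_iff label_def glue_def)

lemma recolor_glue_left:
  assumes "(\<alpha>, \<alpha>') \<in> R1\<^sup>*" and "\<beta> \<in> C2" and "label T \<alpha> = label T \<beta>"
  shows "(glue \<alpha> \<beta>, glue \<alpha>' \<beta>) \<in> R\<^sup>*"
  using assms(1)
proof (induction rule: rtrancl_induct)
  case (step \<alpha>' \<alpha>'')
  then have \<alpha>'\<alpha>'': "\<alpha>' \<in> C1" "\<alpha>'' \<in> C1" "col_adj \<alpha>' \<alpha>''" "label T \<alpha>' = label T \<alpha>''"
    unfolding recolor_def by auto
  have eq: "label T \<alpha>' = label T \<beta>"
    using recolor_rtrancl_label[OF step.hyps(1)] assms(3) by simp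
  have "{w. glue \<alpha>' \<beta> w \<noteq> glue \<alpha>'' \<beta> w} = {w. \<alpha>' w \<noteq> \<alpha>'' w}"
    using colorings_outside[OF \<alpha>'\<alpha>''(1)] colorings_outside[OF \<alpha>'\<alpha>''(2)]
    unfolding glue_def by (metis (full_types))
  then have "col_adj (glue \<alpha>' \<beta>) (glue \<alpha>'' \<beta>)"
    using \<alpha>'\<alpha>''(3) unfolding col_adj_def by simp
  moreover have "glue \<alpha>' \<beta> \<in> C" and "glue \<alpha>'' \<beta> \<in> C"
    using glue_colorings[OF _ assms(2)] \<alpha>'\<alpha>'' eq by simp_all
  ultimately have "(glue \<alpha>' \<beta>, glue \<alpha>'' \<beta>) \<in> R"
    using \<alpha>'\<alpha>''(4) unfolding recolor_def by (simp add: label_glue)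
  with step.IH show ?case by (rule rtrancl_into_rtrancl)
qed simp

end

text \<open>Every fact about the side \<open>V1\<close> holds for \<open>V2\<close> under the prefix \<open>swap\<close>.\<close>
sublocale coloring_join \<subseteq> swap: coloring_join V E T V2 V1 k
  using union inter edges_split by unfold_locales auto

context coloring_join
begin

lemma swap_glue:
  assumes "\<alpha> \<in> C1" and "\<beta> \<in> C2" and "label T \<alpha> = label T \<beta>"
  shows "swap.glue \<beta> \<alpha> = glue \<alpha> \<beta>"
proof
  fix v
  show "swap.glue \<beta> \<alpha> v = glue \<alpha> \<beta> v"
    using label_eqD[OF assms(3), of v] colorings_outside[OF assms(1), of v]
      colorings_outside[OF assms(2), of v] inter
    by (auto simp: glue_def swap.glue_def)
qed

lemma recolor_glue_right:
  assumes "(\<beta>, \<beta>') \<in> R2\<^sup>*" and "\<alpha> \<in> C1" and "\<beta> \<in> C2" and "label T \<alpha> = label T \<beta>"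
  shows "(glue \<alpha> \<beta>, glue \<alpha> \<beta>') \<in> R\<^sup>*"
proof -
  have "\<beta>' \<in> C2" and "label T \<alpha> = label T \<beta>'"
    using recolor_rtrancl_colorings[OF assms(1,3)] recolor_rtrancl_label[OF assms(1)] assms(4)
    by simp_all
  then show ?thesis
    using swap.recolor_glue_left[OF assms(1,2) assms(4)[symmetric]]
    by (simp add: swap_glue assms)
qed

lemma recolor_rtrancl_iff:
  assumes "\<gamma> \<in> C" and "\<gamma>' \<in> C"
  shows "(\<gamma>, \<gamma>') \<in> R\<^sup>* \<longleftrightarrow>
    (label V1 \<gamma>, label V1 \<gamma>') \<in> R1\<^sup>* \<and> (label V2 \<gamma>, label V2 \<gamma>') \<in> R2\<^sup>*"
proof
  assume "(\<gamma>, \<gamma>') \<in> R\<^sup>*"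
  then show "(label V1 \<gamma>, label V1 \<gamma>') \<in> R1\<^sup>* \<and> (label V2 \<gamma>, label V2 \<gamma>') \<in> R2\<^sup>*"
    using recolor_rtrancl_restrict subset_V1 subset_V2 T_subset_V1 T_subset_V2 by blast
next
  assume paths: "(label V1 \<gamma>, label V1 \<gamma>') \<in> R1\<^sup>* \<and> (label V2 \<gamma>, label V2 \<gamma>') \<in> R2\<^sup>*"
  have colorings: "label V1 \<gamma>' \<in> C1" "label V2 \<gamma> \<in> C2"
    using assms label_colorings subset_V1 subset_V2 by blast+
  have labels: "label T (label V1 \<gamma>) = label T (label V2 \<gamma>)"
    "label T (label V1 \<gamma>') = label T (label V2 \<gamma>)"
    using recolor_rtrancl_label paths label_label[OF T_subset_V1] label_label[OF T_subset_V2]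
    by metis+
  have "(glue (label V1 \<gamma>) (label V2 \<gamma>), glue (label V1 \<gamma>') (label V2 \<gamma>)) \<in> R\<^sup>*"
    using recolor_glue_left paths colorings labels by blast
  moreover have "(glue (label V1 \<gamma>') (label V2 \<gamma>), glue (label V1 \<gamma>') (label V2 \<gamma>')) \<in> R\<^sup>*"
    using recolor_glue_right paths colorings labels by blast
  ultimately show "(\<gamma>, \<gamma>') \<in> R\<^sup>*"
    using glue_label assms by (metis rtrancl_trans)
qed

lemma label_class_projection:
  assumes \<gamma>: "\<gamma> \<in> C"
  shows "label V1 ` label_class V E k T \<gamma> = label_class V1 (induced E V1) k T (label V1 \<gamma>)"
proof (intro set_eqI iffI)
  fix \<alpha> assume "\<alpha> \<in> label V1 ` label_class V E k T \<gamma>"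
  then obtain \<gamma>' where "(\<gamma>, \<gamma>') \<in> R\<^sup>*" and "\<alpha> = label V1 \<gamma>'"
    by (auto simp: mem_label_class)
  then show "\<alpha> \<in> label_class V1 (induced E V1) k T (label V1 \<gamma>)"
    using recolor_rtrancl_iff \<gamma> recolor_rtrancl_colorings by (metis mem_label_class)
next
  fix \<alpha> assume "\<alpha> \<in> label_class V1 (induced E V1) k T (label V1 \<gamma>)"
  then have path: "(label V1 \<gamma>, \<alpha>) \<in> R1\<^sup>*"
    by (simp add: mem_label_class)
  have \<alpha>: "\<alpha> \<in> C1" and \<beta>: "label V2 \<gamma> \<in> C2"
    using recolor_rtrancl_colorings[OF path] label_colorings subset_V1 subset_V2 \<gamma> by blast+
  have eq: "label T \<alpha> = label T (label V2 \<gamma>)"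
    using recolor_rtrancl_label[OF path] label_label[OF T_subset_V1] label_label[OF T_subset_V2]
    by metis
  let ?\<gamma>' = "glue \<alpha> (label V2 \<gamma>)"
  have "?\<gamma>' \<in> C" and "label V1 ?\<gamma>' = \<alpha>" and "label V2 ?\<gamma>' = label V2 \<gamma>"
    using glue_colorings[OF \<alpha> \<beta> eq] label_V1_glue[OF \<alpha>] label_V2_glue[OF \<beta> eq] by simp_all
  then have "?\<gamma>' \<in> label_class V E k T \<gamma>"
    using recolor_rtrancl_iff[OF \<gamma>] path by (simp add: mem_label_class)
  then show "\<alpha> \<in> label V1 ` label_class V E k T \<gamma>"
    using \<open>label V1 ?\<gamma>' = \<alpha>\<close> by force
qed

lemma csg_node_projection: "X \<in> N \<Longrightarrow> label V1 ` X \<in> N1"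
  using label_class_projection label_colorings[OF subset_V1] by (auto simp: csg_nodes_eq)

lemma csg_label_projection: "X \<in> N \<Longrightarrow> csg_label T (label V1 ` X) = csg_label T X"
  by (auto simp: csg_nodes_eq label_class_projection csg_label_label_class label_label[OF T_subset_V1])

lemma mem_projection:
  assumes "X \<in> N" and "\<alpha> \<in> label V1 ` X"
  shows "\<alpha> \<in> C1" and "label T \<alpha> = csg_label T X"
  using csg_nodeD(2)[OF csg_node_projection[OF assms(1)] assms(2)]
    csg_label_eq[OF csg_node_projection[OF assms(1)] assms(2)]
    csg_label_projection[OF assms(1)] by simp_all

lemma csg_edge_projection:
  assumes X: "X \<in> N" and Y: "Y \<in> N" and "{X, Y} \<in> A"
  shows "{label V1 ` X, label V1 ` Y} \<in> A1"
proof -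
  obtain \<gamma> \<gamma>' v where \<gamma>: "\<gamma> \<in> X" "\<gamma>' \<in> Y" "{w. \<gamma> w \<noteq> \<gamma>' w} = {v}" "v \<in> T"
    using csg_edgeE[OF assms(3) X Y] .
  then have "col_adj (label V1 \<gamma>) (label V1 \<gamma>')"
    using T_subset_V1 unfolding col_adj_iff label_diff by auto
  moreover have "label V1 ` X \<noteq> label V1 ` Y"
    using csg_edge_label_neq[OF assms(3) X Y] csg_label_projection[OF X] csg_label_projection[OF Y]
    by metis
  ultimately show ?thesis
    using csg_edges_iff[OF csg_node_projection[OF X] csg_node_projection[OF Y]] \<gamma>(1,2) by blast
qed

lemma injective_nbh_projection:
  assumes inj: "injective_nbh N1 A1 (csg_label T)"
    and X: "X \<in> N" and Y: "Y \<in> N" and Z: "Z \<in> N"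
    and "{X, Y} \<in> A" and "{X, Z} \<in> A" and same_label: "csg_label T Y = csg_label T Z"
  shows "label V1 ` Y = label V1 ` Z"
proof (rule ccontr)
  assume "label V1 ` Y \<noteq> label V1 ` Z"
  moreover have "{label V1 ` X, label V1 ` Y} \<in> A1" and "{label V1 ` X, label V1 ` Z} \<in> A1"
    using csg_edge_projection X Y Z assms(5,6) by blast+
  moreover have "label V1 ` Y \<noteq> label V1 ` X" and "label V1 ` Z \<noteq> label V1 ` X"
    using calculation(2,3) csg_edges_iff csg_node_projection X Y Z by metis+
  ultimately have "csg_label T (label V1 ` Y) \<noteq> csg_label T (label V1 ` Z)"
    using inj csg_node_projection X Y Z unfolding injective_nbh_def by blast
  then show False
    using same_label csg_label_projection Y Z by simp
qed

lemma forest_join: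
  assumes "forest N1 A1" and inj: "injective_nbh N A (csg_label T)"
  shows "forest N A"
proof -
  have "has_cycle N1 A1" if "has_cycle N A"
  proof (rule has_cycle_image[OF that])
    fix X Y Z assume X: "X \<in> N" and Y: "Y \<in> N" and Z: "Z \<in> N"
    show "label V1 ` X \<in> N1"
      using csg_node_projection[OF X] .
    assume "{Y, X} \<in> A" "{Y, Z} \<in> A" "X \<noteq> Y" "Z \<noteq> Y" "X \<noteq> Z"
    then have "csg_label T X \<noteq> csg_label T Z"
      using inj X Y Z unfolding injective_nbh_def by blast
    then show "label V1 ` X \<noteq> label V1 ` Z"
      using csg_label_projection X Z by metis
  next
    fix X Y assume X: "X \<in> N" and Y: "Y \<in> N" and "{X, Y} \<in> A"
    then show "{label V1 ` X, label V1 ` Y} \<in> A1"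
      and "label V1 ` X \<noteq> label V1 ` Y"
      using csg_edge_projection csg_edges_iff csg_node_projection by metis+
  qed
  with assms(1) show ?thesis
    unfolding forest_def by blast
qed

end

context coloring_join
begin

lemma mem_csg_node_iff:
  assumes X: "X \<in> N" and \<gamma>: "\<gamma> \<in> C"
  shows "\<gamma> \<in> X \<longleftrightarrow> label V1 \<gamma> \<in> label V1 ` X \<and> label V2 \<gamma> \<in> label V2 ` X"
proof -
  obtain \<gamma>\<^sub>0 where \<gamma>\<^sub>0: "\<gamma>\<^sub>0 \<in> C" and "X = label_class V E k T \<gamma>\<^sub>0"
    using X by (auto simp: csg_nodes_eq)
  then show ?thesis
    using recolor_rtrancl_iff[OF \<gamma>\<^sub>0 \<gamma>] label_class_projection[OF \<gamma>\<^sub>0]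
      swap.label_class_projection[OF \<gamma>\<^sub>0]
    by (simp add: mem_label_class)
qed

lemma csg_nodes_eq_projections:
  assumes X: "X \<in> N" and Y: "Y \<in> N"
    and "label V1 ` X = label V1 ` Y" and "label V2 ` X = label V2 ` Y"
  shows "X = Y"
proof -
  obtain \<gamma> where "\<gamma> \<in> C" and X_eq: "X = label_class V E k T \<gamma>"
    using X by (auto simp: csg_nodes_eq)
  then have "\<gamma> \<in> Y"
    using mem_csg_node_iff[OF X] mem_csg_node_iff[OF Y] assms(3,4) label_class_self by metis
  then show ?thesis
    using X_eq csg_nodeD(1)[OF Y] by simp
qed

text \<open>Conversely to \<open>csg_edge_projection\<close>, the two recolorings witnessing the projected
  edges happen at the same vertex of \<open>T\<close>, so gluing them gives a single recoloring.\<close>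
lemma csg_edge_of_projections:
  assumes X: "X \<in> N" and Y: "Y \<in> N"
    and "{label V1 ` X, label V1 ` Y} \<in> A1" and "{label V2 ` X, label V2 ` Y} \<in> A2"
  shows "{X, Y} \<in> A"
proof -
  obtain \<alpha> \<alpha>' u where \<alpha>: "\<alpha> \<in> label V1 ` X" "\<alpha>' \<in> label V1 ` Y" "{w. \<alpha> w \<noteq> \<alpha>' w} = {u}" "u \<in> T"
    using csg_edgeE[OF assms(3) csg_node_projection[OF X] csg_node_projection[OF Y]] .
  obtain \<beta> \<beta>' v where \<beta>: "\<beta> \<in> label V2 ` X" "\<beta>' \<in> label V2 ` Y" "{w. \<beta> w \<noteq> \<beta>' w} = {v}" "v \<in> T"
    using csg_edgeE[OF assms(4) swap.csg_node_projection[OF X] swap.csg_node_projection[OF Y]] .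
  have colorings: "\<alpha> \<in> C1" "\<alpha>' \<in> C1" "\<beta> \<in> C2" "\<beta>' \<in> C2"
    using mem_projection(1) swap.mem_projection(1) X Y \<alpha>(1,2) \<beta>(1,2) by blast+
  have labels: "label T \<alpha> = label T \<beta>" "label T \<alpha>' = label T \<beta>'"
    using mem_projection(2) swap.mem_projection(2) X Y \<alpha>(1,2) \<beta>(1,2) by metis+
  have "{w. label T \<alpha> w \<noteq> label T \<alpha>' w} = {u}" and "{w. label T \<beta> w \<noteq> label T \<beta>' w} = {v}"
    using \<alpha>(3,4) \<beta>(3,4) by (auto simp: label_diff)
  then have "u = v"
    using labels by simp
  have "{w. glue \<alpha> \<beta> w \<noteq> glue \<alpha>' \<beta>' w} = {v}"
    using \<alpha>(3) \<beta>(3) \<open>u = v\<close> \<open>v \<in> T\<close> T_subset_V1 unfolding glue_def by auto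
  then have "col_adj (glue \<alpha> \<beta>) (glue \<alpha>' \<beta>')"
    by (auto simp: col_adj_iff)
  moreover have "glue \<alpha> \<beta> \<in> X"
    using mem_csg_node_iff[OF X glue_colorings[OF colorings(1,3) labels(1)]] \<alpha>(1) \<beta>(1)
    by (simp add: label_V1_glue[OF colorings(1)] label_V2_glue[OF colorings(3) labels(1)])
  moreover have "glue \<alpha>' \<beta>' \<in> Y"
    using mem_csg_node_iff[OF Y glue_colorings[OF colorings(2,4) labels(2)]] \<alpha>(2) \<beta>(2)
    by (simp add: label_V1_glue[OF colorings(2)] label_V2_glue[OF colorings(4) labels(2)])
  moreover have "X \<noteq> Y"
    using assms(3) csg_edges_iff[OF csg_node_projection[OF X] csg_node_projection[OF Y]] by auto
  ultimately show ?thesis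
    using csg_edges_iff[OF X Y] by blast
qed

lemma injective_nbh_join:
  assumes "injective_nbh N1 A1 (csg_label T)" and "injective_nbh N2 A2 (csg_label T)"
  shows "injective_nbh N A (csg_label T)"
  unfolding injective_nbh_def
proof (intro ballI impI notI)
  fix X Y Z assume X: "X \<in> N" and Y: "Y \<in> N" and Z: "Z \<in> N"
    and edges: "{X, Y} \<in> A \<and> {X, Z} \<in> A \<and> Y \<noteq> X \<and> Z \<noteq> X \<and> Y \<noteq> Z"
    and "csg_label T Y = csg_label T Z"
  then have "label V1 ` Y = label V1 ` Z" and "label V2 ` Y = label V2 ` Z"
    using injective_nbh_projection[OF assms(1) X Y Z] swap.injective_nbh_projection[OF assms(2) X Y Z]
    by blast+
  then show False
    using csg_nodes_eq_projections[OF Y Z] edges by blast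
qed

lemma inj_on_projection:
  assumes "inj_on (csg_label T) N1"
  shows "inj_on (\<lambda>X. label V2 ` X) N"
proof (rule inj_onI)
  fix X Y assume X: "X \<in> N" and Y: "Y \<in> N" and eq2: "label V2 ` X = label V2 ` Y"
  then have "csg_label T X = csg_label T Y"
    using swap.csg_label_projection by metis
  then have "label V1 ` X = label V1 ` Y"
    using assms csg_label_projection csg_node_projection X Y unfolding inj_on_def by metis
  with eq2 show "X = Y"
    using csg_nodes_eq_projections X Y by blast
qed

lemma projection_onto:
  assumes "\<forall>\<beta>\<in>C2. \<exists>\<alpha>\<in>C1. label T \<alpha> = label T \<beta>"
  shows "(\<lambda>X. label V2 ` X) ` N = N2"
proof
  show "(\<lambda>X. label V2 ` X) ` N \<subseteq> N2"
    using swap.csg_node_projection by blast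
  show "N2 \<subseteq> (\<lambda>X. label V2 ` X) ` N"
  proof
    fix Z assume "Z \<in> N2"
    then obtain \<beta> where \<beta>: "\<beta> \<in> C2" and Z: "Z = label_class V2 (induced E V2) k T \<beta>"
      by (auto simp: csg_nodes_eq)
    then obtain \<alpha> where \<alpha>: "\<alpha> \<in> C1" and eq: "label T \<alpha> = label T \<beta>"
      using assms by blast
    have "glue \<alpha> \<beta> \<in> C"
      using glue_colorings[OF \<alpha> \<beta> eq] .
    then have "label_class V E k T (glue \<alpha> \<beta>) \<in> N"
      and "label V2 ` label_class V E k T (glue \<alpha> \<beta>) = Z"
      using swap.label_class_projection label_V2_glue[OF \<beta> eq] Z by (auto simp: csg_nodes_eq)
    then show "Z \<in> (\<lambda>X. label V2 ` X) ` N"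
      by blast
  qed
qed

lemma csg_edges_iff_projection:
  assumes edges1: "\<forall>x\<in>N1. \<forall>y\<in>N1. {x, y} \<in> A1 \<longleftrightarrow> card {v \<in> T. csg_label T x v \<noteq> csg_label T y v} = 1"
    and X: "X \<in> N" and Y: "Y \<in> N"
  shows "{X, Y} \<in> A \<longleftrightarrow> {label V2 ` X, label V2 ` Y} \<in> A2"
proof
  assume "{X, Y} \<in> A"
  then show "{label V2 ` X, label V2 ` Y} \<in> A2"
    using swap.csg_edge_projection X Y by blast
next
  assume edge2: "{label V2 ` X, label V2 ` Y} \<in> A2"
  obtain v where "v \<in> T" and "{w. csg_label T X w \<noteq> csg_label T Y w} = {v}"
    using csg_edge_label_diff[OF edge2 swap.csg_node_projection[OF X] swap.csg_node_projection[OF Y]]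
      swap.csg_label_projection X Y by auto
  then have "card {w \<in> T. csg_label T (label V1 ` X) w \<noteq> csg_label T (label V1 ` Y) w} = 1"
    using csg_label_projection X Y by (simp add: Collect_conj_eq Int_commute)
  then have "{label V1 ` X, label V1 ` Y} \<in> A1"
    using edges1 csg_node_projection X Y by blast
  with edge2 show "{X, Y} \<in> A"
    using csg_edge_of_projections X Y by blast
qed

lemma labeled_iso_join:
  assumes clique: "is_clique V E T" and "C \<noteq> {}"
    and cc: "color_complete m k N1 A1 (csg_label T)"
  shows "labeled_iso N A (csg_label T) N2 A2 (csg_label T)"
proof -
  have label_colors_T: "coloring T (complete_edges T) k (csg_label T x)" if "x \<in> N1" for x
    using that label_coloring_clique[OF _ T_subset_V1 clique]
    by (auto simp: csg_nodes_eq csg_label_label_class)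
  obtain \<gamma> where "\<gamma> \<in> C"
    using \<open>C \<noteq> {}\<close> by blast
  then have x: "label_class V1 (induced E V1) k T (label V1 \<gamma>) \<in> N1"
    using label_colorings[OF subset_V1] by (auto simp: csg_nodes_eq)
  note unique = color_complete_on(1)[OF cc x label_colors_T[OF x]]
  note edges1 = color_complete_on(2)[OF cc x label_colors_T[OF x]]
  have "inj_on (csg_label T) N1"
  proof (rule inj_onI)
    fix x y assume "x \<in> N1" "y \<in> N1" "csg_label T x = csg_label T y"
    then show "x = y"
      using unique label_colors_T[OF \<open>x \<in> N1\<close>] by metis
  qed
  moreover have "\<forall>\<beta>\<in>C2. \<exists>\<alpha>\<in>C1. label T \<alpha> = label T \<beta>"
  proof
    fix \<beta> assume "\<beta> \<in> C2"
    then obtain x where "x \<in> N1" and "csg_label T x = label T \<beta>"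
      using unique label_coloring_clique[OF _ T_subset_V2 clique] by blast
    then show "\<exists>\<alpha>\<in>C1. label T \<alpha> = label T \<beta>"
      by (auto simp: csg_nodes_eq csg_label_label_class)
  qed
  ultimately have "bij_betw (\<lambda>X. label V2 ` X) N N2"
    unfolding bij_betw_def using inj_on_projection projection_onto by blast
  then show ?thesis
    unfolding labeled_iso_def
    using csg_edges_iff_projection[OF edges1] swap.csg_label_projection by blast
qed

end

theorem lemma9:
  fixes V V1 V2 T :: "'v set" and E :: "'v set set" and k m :: nat
  assumes "graph V E"
    and "colorable V E k"
    and "chordal V E"
    and "is_clique V E T"
    and "is_join V E T V1 V2"
  shows "(color_complete m k (csg_nodes V1 (induced E V1) k T) (csg_edges V1 (induced E V1) k T)
              (csg_label T)
            \<longrightarrow> labeled_iso (csg_nodes V E k T) (csg_edges V E k T) (csg_label T)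
                  (csg_nodes V2 (induced E V2) k T) (csg_edges V2 (induced E V2) k T) (csg_label T))
       \<and> (color_complete m k (csg_nodes V2 (induced E V2) k T) (csg_edges V2 (induced E V2) k T)
              (csg_label T)
            \<longrightarrow> labeled_iso (csg_nodes V E k T) (csg_edges V E k T) (csg_label T)
                  (csg_nodes V1 (induced E V1) k T) (csg_edges V1 (induced E V1) k T) (csg_label T))
       \<and> (forest (csg_nodes V1 (induced E V1) k T) (csg_edges V1 (induced E V1) k T)
            \<and> injective_nbh (csg_nodes V1 (induced E V1) k T) (csg_edges V1 (induced E V1) k T) (csg_label T)
            \<and> forest (csg_nodes V2 (induced E V2) k T) (csg_edges V2 (induced E V2) k T)
            \<and> injective_nbh (csg_nodes V2 (induced E V2) k T) (csg_edges V2 (induced E V2) k T) (csg_label T)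
            \<longrightarrow> forest (csg_nodes V E k T) (csg_edges V E k T)
              \<and> injective_nbh (csg_nodes V E k T) (csg_edges V E k T) (csg_label T))"
proof -
  from assms(5) interpret coloring_join V E T V1 V2 k
    unfolding is_join_def induced_def by unfold_locales blast+
  have "colorings V E k \<noteq> {}"
    using assms(2) unfolding colorable_def .
  then show ?thesis
    using labeled_iso_join swap.labeled_iso_join assms(4) forest_join injective_nbh_join by blast
qed

end
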